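(* Let $\mathbf{x}\in\mathcal{P}$ and consider the scaled-down notification policy run with ex ante solution $\mathbf{x}$. Under the index-based priority scheme, for every volunteer $v\in[V]$, the expected number of tasks completed by $v$ is at least $\frac{1}{2-q}f_v(\mathbf{x})$, where $f_v(\mathbf{x})=\sum_{t=1}^T\sum_{s=1}^S\lambda_{s,t}\big(\prod_{u<v}(1-p_{u,s}x_{u,s,t})\big)p_{v,s}x_{v,s,t}$ and $q$ is the minimum discrete hazard rate of $g$.
   Context: Online volunteer notification problem. An instance consists of volunteers $[V]$, task types $[S]$, horizon $T$, arrival probabilities $\lambda_{s,t}\ge0$ with $\sum_s\lambda_{s,t}\le1$, match probabilities $p_{v,s}\in[0,1]$, and a probability mass function $g$ on the positive integers with CDF $G(\tau)=\sum_{i\le\tau}g(i)$, $G(0)=0$. In each period $t$ at most one task arrives, of type $s$ with probability $\lambda_{s,t}$, independently across periods. All volunteers start active. Upon an arrival the platform notifies a subset of volunteers; each notified active volunteer $v$ responds positively independently with probability $p_{v,s}$. A volunteer active and notified at time $t$ becomes inactive (regardless of response) and active again at $t+Z$, $Z\sim g$ independent; inactive volunteers ignore notifications and are unaffected by them. Index-based priority scheme: if several notified active volunteers respond positively, the one with smallest index completes the task. MDHR: $q=\min_{\tau\in\mathbb{N}}\frac{g(\tau)}{1-G(\tau-1)}$ (with $\frac00:=1$). $\mathcal{P}$: set of $\mathbf{x}\in\mathbb{R}^{V\times S\times T}$ with $0\le x_{v,s,t}\le1$ and $\sum_{\tau=1}^t\sum_{s}\lambda_{s,\tau}x_{v,s,\tau}(1-G(t-\tau))\le1$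 for all $v,t$. SDN policy with ex ante solution $\mathbf{x}$: $\beta_{v,1}=1$, $\beta_{v,t}=1-\sum_{t'=1}^{t-1}\sum_{s=1}^S\lambda_{s,t'}\frac{x_{v,s,t'}}{2-q}(1-G(t-t'))$ for $t\ge2$; when a task of type $s$ arrives at time $t$, each volunteer $v$ is notified independently with probability $\frac{x_{v,s,t}}{(2-q)\beta_{v,t}}$. *)

theory Defs
  imports "HOL-Probability.Probability"
begin

text \<open>Conventions: volunteers are 1..V (smaller index = higher priority), task types 1..S,
periods 1..T. lam s t = arrival probability, p u s = match probability, g = recovery-time pmf
(on positive integers, i.e. pmf g 0 = 0). The platform state is a function st where st u is the
first period at which volunteer u is active again (u is active at period t iff st u \<le> t).\<close>

definition Gcdf :: "nat pmf \<Rightarrow> nat \<Rightarrow> real" where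
  "Gcdf g \<tau> = (\<Sum>i=1..\<tau>. pmf g i)"

definition hazard :: "nat pmf \<Rightarrow> nat \<Rightarrow> real" where
  "hazard g \<tau> = (if 1 - Gcdf g (\<tau> - 1) = 0 then 1 else pmf g \<tau> / (1 - Gcdf g (\<tau> - 1)))"

definition mdhr :: "nat pmf \<Rightarrow> real" where
  "mdhr g = (INF \<tau>\<in>{1..}. hazard g \<tau>)"

definition in_P ::
  "nat \<Rightarrow> nat \<Rightarrow> nat \<Rightarrow> (nat \<Rightarrow> nat \<Rightarrow> real) \<Rightarrow> nat pmf \<Rightarrow> (nat \<Rightarrow> nat \<Rightarrow> nat \<Rightarrow> real) \<Rightarrow> bool" where
  "in_P V S T lam g x \<longleftrightarrow>
     (\<forall>v\<in>{1..V}. \<forall>s\<in>{1..S}. \<forall>t\<in>{1..T}. 0 \<le> x v s t \<and> x v s t \<le> 1) \<and>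
     (\<forall>v\<in>{1..V}. \<forall>t\<in>{1..T}.
        (\<Sum>\<tau>=1..t. \<Sum>s=1..S. lam s \<tau> * x v s \<tau> * (1 - Gcdf g (t - \<tau>))) \<le> 1)"

definition f_obj ::
  "nat \<Rightarrow> nat \<Rightarrow> (nat \<Rightarrow> nat \<Rightarrow> real) \<Rightarrow> (nat \<Rightarrow> nat \<Rightarrow> real) \<Rightarrow> (nat \<Rightarrow> nat \<Rightarrow> nat \<Rightarrow> real) \<Rightarrow> nat \<Rightarrow> real" where
  "f_obj S T lam p x v = (\<Sum>t=1..T. \<Sum>s=1..S.
      lam s t * (\<Prod>u\<in>{1..<v}. 1 - p u s * x u s t) * p v s * x v s t)"

definition sdn_beta ::
  "nat \<Rightarrow> (nat \<Rightarrow> nat \<Rightarrow> real) \<Rightarrow> nat pmf \<Rightarrow> (nat \<Rightarrow> nat \<Rightarrow> nat \<Rightarrow> real) \<Rightarrow> nat \<Rightarrow> nat \<Rightarrow> real" where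
  "sdn_beta S lam g x v t = 1 - (\<Sum>t'=1..t-1. \<Sum>s=1..S.
      lam s t' * (x v s t' / (2 - mdhr g)) * (1 - Gcdf g (t - t')))"

text \<open>SDN notification probability of volunteer v for a type-s task at time t
 (bernoulli_pmf clamps its parameter to [0,1]).\<close>
definition sdn_prob ::
  "nat \<Rightarrow> (nat \<Rightarrow> nat \<Rightarrow> real) \<Rightarrow> nat pmf \<Rightarrow> (nat \<Rightarrow> nat \<Rightarrow> nat \<Rightarrow> real) \<Rightarrow> nat \<Rightarrow> nat \<Rightarrow> nat \<Rightarrow> real" where
  "sdn_prob S lam g x v s t = x v s t / ((2 - mdhr g) * sdn_beta S lam g x v t)"

definition arrival_pmf :: "(nat \<Rightarrow> nat \<Rightarrow> real) \<Rightarrow> nat \<Rightarrow> nat \<Rightarrow> nat option pmf" where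
  "arrival_pmf lam S t = embed_pmf (\<lambda>a. case a of
       None \<Rightarrow> 1 - (\<Sum>s=1..S. lam s t)
     | Some s \<Rightarrow> (if s \<in> {1..S} then lam s t else 0))"

text \<open>One period t of the process under a (randomized, state-independent) notification
 rule nprob u s t, index-based priority. Returns (1 if v completes the task else 0, new state).\<close>
definition step ::
  "nat \<Rightarrow> nat \<Rightarrow> (nat \<Rightarrow> nat \<Rightarrow> real) \<Rightarrow> (nat \<Rightarrow> nat \<Rightarrow> real) \<Rightarrow> nat pmf
   \<Rightarrow> (nat \<Rightarrow> nat \<Rightarrow> nat \<Rightarrow> real) \<Rightarrow> nat \<Rightarrow> nat \<Rightarrow> (nat \<Rightarrow> nat) \<Rightarrow> (nat \<times> (nat \<Rightarrow> nat)) pmf" where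
  "step V S lam p g nprob v t st =
     bind_pmf (arrival_pmf lam S t) (\<lambda>a. case a of
        None \<Rightarrow> return_pmf (0, st)
      | Some s \<Rightarrow>
          bind_pmf (Pi_pmf {1..V} False (\<lambda>u. bernoulli_pmf (nprob u s t))) (\<lambda>N.
          bind_pmf (Pi_pmf {1..V} False (\<lambda>u. bernoulli_pmf (p u s))) (\<lambda>R.
          bind_pmf (Pi_pmf {1..V} 0 (\<lambda>u. g)) (\<lambda>Z.
            let act = (\<lambda>u. st u \<le> t);
                contrib = (\<lambda>u. u \<in> {1..V} \<and> N u \<and> act u \<and> R u)
            in return_pmf
                 (if contrib v \<and> (\<forall>u<v. \<not> contrib u) then 1 else 0,
                  \<lambda>u. if u \<in> {1..V} \<and> N u \<and> act u then t + Z u else st u)))))"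

primrec run ::
  "nat \<Rightarrow> nat \<Rightarrow> (nat \<Rightarrow> nat \<Rightarrow> real) \<Rightarrow> (nat \<Rightarrow> nat \<Rightarrow> real) \<Rightarrow> nat pmf
   \<Rightarrow> (nat \<Rightarrow> nat \<Rightarrow> nat \<Rightarrow> real) \<Rightarrow> nat \<Rightarrow> nat \<Rightarrow> nat \<Rightarrow> (nat \<Rightarrow> nat) \<Rightarrow> nat pmf" where
  "run V S lam p g nprob v 0 t st = return_pmf 0"
| "run V S lam p g nprob v (Suc n) t st =
     bind_pmf (step V S lam p g nprob v t st)
       (\<lambda>(r, st'). map_pmf ((+) r) (run V S lam p g nprob v n (Suc t) st'))"

definition sdn_expected_completed ::
  "nat \<Rightarrow> nat \<Rightarrow> nat \<Rightarrow> (nat \<Rightarrow> nat \<Rightarrow> real) \<Rightarrow> (nat \<Rightarrow> nat \<Rightarrow> real) \<Rightarrow> nat pmf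
   \<Rightarrow> (nat \<Rightarrow> nat \<Rightarrow> nat \<Rightarrow> real) \<Rightarrow> nat \<Rightarrow> real" where
  "sdn_expected_completed V S T lam p g x v =
     measure_pmf.expectation (run V S lam p g (sdn_prob S lam g x) v T 1 (\<lambda>u. 0)) real"

end

theory Submission
  imports Defs
begin

text \<open>Under SDN, v is active at the start of period t with probability exactly
  \<open>\<beta> v t\<close>. Indeed, by induction over the periods, v is still recovering at time m with
  probability \<open>\<Sum>t' < t. notify_rate t' * (1 - G (m - t'))\<close>: an active v is notified with
  probability \<open>x / ((2 - q) \<beta>)\<close> and then stays busy for a time drawn from g. Hence v is notified
  while active with probability exactly \<open>x v s t / (2 - q)\<close>, whereas, whatever the state, each
  \<open>u < v\<close> independently claims the task with probability at most \<open>p u s * x u s t\<close>; so the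
  priority rule gives v the task with probability at least the corresponding summand of
  \<open>f_obj / (2 - q)\<close>. The factor \<open>2 - q\<close> keeps the notification probabilities at most 1:
  the hazard bound \<open>1 - G k \<le> (1 - q) (1 - G (k - 1))\<close> and the constraint of \<open>\<P>\<close> at
  \<open>t - 1\<close> give \<open>\<beta> v t \<ge> 1 / (2 - q)\<close>.\<close>

lemma integrable_measure_pmf_bounded:
  fixes f :: "'a \<Rightarrow> real"
  assumes "\<And>x. x \<in> set_pmf M \<Longrightarrow> \<bar>f x\<bar> \<le> B"
  shows "integrable (measure_pmf M) f"
  by (rule measure_pmf.integrable_const_bound[where B=B])
     (use assms in \<open>auto simp: AE_measure_pmf_iff\<close>)

lemma expectation_measure_pmf_bounds:
  fixes f :: "'a \<Rightarrow> real"
  assumes "\<And>x. x \<in> set_pmf M \<Longrightarrow> a \<le> f x \<and> f x \<le> b"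
  shows "a \<le> measure_pmf.expectation M f \<and> measure_pmf.expectation M f \<le> b"
proof -
  have "integrable (measure_pmf M) f"
    by (rule integrable_measure_pmf_bounded[where B="\<bar>a\<bar> + \<bar>b\<bar>"]) (use assms in force)
  then show ?thesis
    using measure_pmf.integral_ge_const[of M f a] measure_pmf.integral_le_const[of M f b] assms
    by (auto simp: AE_measure_pmf_iff)
qed

lemma expectation_bind_pmf:
  fixes h :: "'b \<Rightarrow> real"
  assumes "\<And>y. y \<in> set_pmf (bind_pmf M N) \<Longrightarrow> \<bar>h y\<bar> \<le> B"
  shows "measure_pmf.expectation (bind_pmf M N) h =
         measure_pmf.expectation M (\<lambda>x. measure_pmf.expectation (N x) h)"
proof -
  \<comment> \<open>integral_bind needs a globally bounded integrand, so h is first clipped to [-B, B]\<close>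
  define h' where "h' y = max (-B) (min B (h y))" for y
  obtain y where "y \<in> set_pmf (bind_pmf M N)"
    using set_pmf_not_empty[of "bind_pmf M N"] by blast
  with assms have "0 \<le> B"
    by (meson abs_ge_zero order_trans)
  have h': "h y = h' y" if "x \<in> set_pmf M" "y \<in> set_pmf (N x)" for x y
  proof -
    have "\<bar>h y\<bar> \<le> B" using that by (intro assms) auto
    then show ?thesis by (auto simp: h'_def)
  qed
  have "measure_pmf.expectation (bind_pmf M N) h = measure_pmf.expectation (bind_pmf M N) h'"
    by (intro integral_cong_AE) (auto simp: AE_measure_pmf_iff h')
  also have "\<dots> = measure_pmf.expectation M (\<lambda>x. measure_pmf.expectation (N x) h')"
    unfolding measure_pmf_bind
    by (rule integral_bind[where K="count_space UNIV" and B=B and B'=1])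
       (use \<open>0 \<le> B\<close> in \<open>auto simp: h'_def measure_pmf.emeasure_space_1 measure_pmf_in_subprob_algebra\<close>)
  also have "\<dots> = measure_pmf.expectation M (\<lambda>x. measure_pmf.expectation (N x) h)"
    by (intro integral_cong_AE) (auto simp: AE_measure_pmf_iff h' intro!: integral_cong_AE)
  finally show ?thesis .
qed

lemma expectation_Pi_pmf_component:
  fixes f :: "'b \<Rightarrow> real"
  assumes "finite A" "x \<in> A"
  shows "measure_pmf.expectation (Pi_pmf A d P) (\<lambda>Z. f (Z x)) = measure_pmf.expectation (P x) f"
proof -
  have "measure_pmf.expectation (Pi_pmf A d P) (\<lambda>Z. f (Z x)) =
        measure_pmf.expectation (map_pmf (\<lambda>Z. Z x) (Pi_pmf A d P)) f"
    by simp
  also have "map_pmf (\<lambda>Z. Z x) (Pi_pmf A d P) = P x"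
    using Pi_pmf_component[OF assms(1), of x d P] assms(2) by simp
  finally show ?thesis .
qed

lemma expectation_prod_two_Pi_bernoulli:
  fixes \<phi> :: "'a \<Rightarrow> bool \<Rightarrow> bool \<Rightarrow> real"
  assumes "finite A"
    and a: "\<And>u. u \<in> A \<Longrightarrow> 0 \<le> a u \<and> a u \<le> 1" and b: "\<And>u. u \<in> A \<Longrightarrow> 0 \<le> b u \<and> b u \<le> 1"
    and \<phi>: "\<And>u n r. u \<in> A \<Longrightarrow> 0 \<le> \<phi> u n r"
  shows "measure_pmf.expectation (Pi_pmf A False (\<lambda>u. bernoulli_pmf (a u))) (\<lambda>N.
           measure_pmf.expectation (Pi_pmf A False (\<lambda>u. bernoulli_pmf (b u))) (\<lambda>R.
             \<Prod>u\<in>A. \<phi> u (N u) (R u)))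
       = (\<Prod>u\<in>A. a u * (b u * \<phi> u True True + (1 - b u) * \<phi> u True False)
                 + (1 - a u) * (b u * \<phi> u False True + (1 - b u) * \<phi> u False False))"
proof -
  have inner: "measure_pmf.expectation (Pi_pmf A False (\<lambda>u. bernoulli_pmf (b u))) (\<lambda>R.
                 \<Prod>u\<in>A. \<phi> u (N u) (R u))
             = (\<Prod>u\<in>A. b u * \<phi> u (N u) True + (1 - b u) * \<phi> u (N u) False)" for N
    by (subst expectation_prod_Pi_pmf)
       (use assms in \<open>auto simp: integrable_measure_pmf_finite intro!: prod.cong\<close>)
  have "0 \<le> b u * \<phi> u n True + (1 - b u) * \<phi> u n False" if "u \<in> A" for u n
    using b[OF that] \<phi>[OF that] by simp
  then show ?thesis
    unfolding inner
    by (subst expectation_prod_Pi_pmf)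
       (use assms in \<open>auto simp: integrable_measure_pmf_finite algebra_simps intro!: prod.cong\<close>)
qed

lemma Gcdf_le_1: "Gcdf g k \<le> 1"
proof -
  have "Gcdf g k = measure_pmf.prob g {1..k}"
    unfolding Gcdf_def by (simp add: measure_measure_pmf_finite)
  then show ?thesis by simp
qed

lemma Gcdf_pred: "1 \<le> k \<Longrightarrow> Gcdf g k = Gcdf g (k - 1) + pmf g k"
  unfolding Gcdf_def by (cases k) simp_all

lemma hazard_nonneg: "0 \<le> hazard g t"
  unfolding hazard_def using Gcdf_le_1[of g "t - 1"] by auto

lemma hazard_le_1:
  assumes "1 \<le> t"
  shows "hazard g t \<le> 1"
proof -
  have "pmf g t \<le> 1 - Gcdf g (t - 1)"
    using Gcdf_pred[OF assms, of g] Gcdf_le_1[of g t] by linarith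
  then show ?thesis
    unfolding hazard_def using Gcdf_le_1[of g "t - 1"] by (auto simp: divide_le_eq_1)
qed

lemma mdhr_le_hazard: "1 \<le> t \<Longrightarrow> mdhr g \<le> hazard g t"
  unfolding mdhr_def by (rule cINF_lower) (auto intro: bdd_belowI[of _ 0] simp: hazard_nonneg)

lemma mdhr_le_1: "mdhr g \<le> 1"
  using mdhr_le_hazard[of 1 g] hazard_le_1[of 1 g] by simp

lemma survival_le_mdhr:
  assumes "1 \<le> k"
  shows "1 - Gcdf g k \<le> (1 - mdhr g) * (1 - Gcdf g (k - 1))"
proof -
  note G = Gcdf_pred[OF assms, of g]
  show ?thesis
  proof (cases "1 - Gcdf g (k - 1) = 0")
    case True
    then show ?thesis using G Gcdf_le_1[of g k] by simp
  next
    case False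
    then have pos: "0 < 1 - Gcdf g (k - 1)"
      using Gcdf_le_1[of g "k - 1"] by linarith
    have "mdhr g \<le> pmf g k / (1 - Gcdf g (k - 1))"
      using mdhr_le_hazard[OF assms, of g] False unfolding hazard_def by simp
    then have "mdhr g * (1 - Gcdf g (k - 1)) \<le> pmf g k"
      using pos by (simp add: le_divide_eq)
    then show ?thesis using G by (simp add: algebra_simps)
  qed
qed

lemma expectation_survival:
  assumes "pmf g 0 = 0" and "t \<le> m"
  shows "measure_pmf.expectation g (\<lambda>z. if m < t + z then 1 else 0) = 1 - Gcdf g (m - t)"
proof -
  have "(\<lambda>z. if m < t + z then 1 else 0 :: real) = indicator (UNIV - {..m - t})"
    using assms(2) by (auto simp: indicator_def fun_eq_iff)
  then have "measure_pmf.expectation g (\<lambda>z. if m < t + z then 1 else 0)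
      = measure_pmf.prob g (UNIV - {..m - t})"
    by simp
  also have "\<dots> = 1 - (\<Sum>i\<le>m - t. pmf g i)"
    using measure_pmf.prob_compl[of "{..m - t}" g] by (simp add: measure_measure_pmf_finite)
  also have "(\<Sum>i\<le>m - t. pmf g i) = Gcdf g (m - t)"
    unfolding Gcdf_def atMost_atLeast0 using assms(1) by (simp add: sum.atLeast_Suc_atMost)
  finally show ?thesis .
qed

lemma prod_of_bool: "finite A \<Longrightarrow> (\<Prod>u\<in>A. of_bool (P u)) = (of_bool (\<forall>u\<in>A. P u) :: 'a::comm_semiring_1)"
  by (induction A rule: finite_induct) auto

lemma prob_first_success:
  fixes a b :: "nat \<Rightarrow> real" and act :: "nat \<Rightarrow> bool"
  assumes v: "v \<in> {1..V}"
    and a: "\<And>u. u \<in> {1..V} \<Longrightarrow> 0 \<le> a u \<and> a u \<le> 1"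
    and b: "\<And>u. u \<in> {1..V} \<Longrightarrow> 0 \<le> b u \<and> b u \<le> 1"
  defines "w u \<equiv> if act u then a u * b u else 0"
  shows "measure_pmf.expectation (Pi_pmf {1..V} False (\<lambda>u. bernoulli_pmf (a u))) (\<lambda>N.
           measure_pmf.expectation (Pi_pmf {1..V} False (\<lambda>u. bernoulli_pmf (b u))) (\<lambda>R.
             if (v \<in> {1..V} \<and> N v \<and> act v \<and> R v) \<and> (\<forall>u<v. \<not> (u \<in> {1..V} \<and> N u \<and> act u \<and> R u))
             then 1 else 0))
       = w v * (\<Prod>u\<in>{1..<v}. 1 - w u)"
proof -
  \<comment> \<open>the event that v wins factorises over the volunteers\<close>
  define P where "P u n r \<longleftrightarrow> (if u = v then n \<and> act v \<and> r else u < v \<longrightarrow> \<not> (n \<and> act u \<and> r))"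
    for u n r
  have win: "(if (v \<in> {1..V} \<and> N v \<and> act v \<and> R v) \<and> (\<forall>u<v. \<not> (u \<in> {1..V} \<and> N u \<and> act u \<and> R u))
              then 1 else 0) = (\<Prod>u\<in>{1..V}. of_bool (P u (N u) (R u)) :: real)" for N R
    using v by (auto simp: prod_of_bool P_def)
  define c where "c u = (if u = v then w v else if u < v then 1 - w u else 1)" for u
  have factor: "a u * (b u * of_bool (P u True True) + (1 - b u) * of_bool (P u True False))
                + (1 - a u) * (b u * of_bool (P u False True) + (1 - b u) * of_bool (P u False False))
              = c u" for u
    by (auto simp: P_def w_def c_def algebra_simps)
  have "{1..V} = insert v ({1..<v} \<union> {v<..V})" using v by auto
  then have "(\<Prod>u\<in>{1..V}. c u) = c v * (\<Prod>u\<in>{1..<v} \<union> {v<..V}. c u)"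
    by simp
  also have "(\<Prod>u\<in>{1..<v} \<union> {v<..V}. c u) = (\<Prod>u\<in>{1..<v}. c u) * (\<Prod>u\<in>{v<..V}. c u)"
    by (rule prod.union_disjoint) auto
  also have "(\<Prod>u\<in>{1..<v}. c u) = (\<Prod>u\<in>{1..<v}. 1 - w u)"
    by (rule prod.cong) (auto simp: c_def)
  also have "(\<Prod>u\<in>{v<..V}. c u) = 1"
    by (rule prod.neutral) (auto simp: c_def)
  finally have "(\<Prod>u\<in>{1..V}. c u) = w v * (\<Prod>u\<in>{1..<v}. 1 - w u)"
    by (simp add: c_def)
  then show ?thesis
    unfolding win by (subst expectation_prod_two_Pi_bernoulli) (use a b in \<open>auto simp: factor\<close>)
qed

lemma pmf_arrival_pmf:
  assumes nonneg: "\<And>s. s \<in> {1..S} \<Longrightarrow> 0 \<le> lam s t" and total: "(\<Sum>s=1..S. lam s t) \<le> 1"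
  shows "pmf (arrival_pmf lam S t) a = (case a of None \<Rightarrow> 1 - (\<Sum>s=1..S. lam s t)
     | Some s \<Rightarrow> (if s \<in> {1..S} then lam s t else 0))"
proof -
  define f where "f a = (case a of None \<Rightarrow> 1 - (\<Sum>s=1..S. lam s t)
     | Some s \<Rightarrow> (if s \<in> {1..S} then lam s t else 0))" for a
  have f_nonneg: "0 \<le> f a" for a
    using nonneg total by (auto simp: f_def split: option.split)
  define A where "A = insert None (Some ` {1..S})"
  have "(\<integral>\<^sup>+a. ennreal (f a) \<partial>count_space UNIV) = (\<Sum>a\<in>A. ennreal (f a))"
    by (rule nn_integral_count_space') (auto simp: A_def f_def split: option.split)
  also have "\<dots> = ennreal (f None + (\<Sum>a\<in>Some ` {1..S}. f a))"
    using f_nonneg by (simp add: A_def sum_ennreal)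
  also have "(\<Sum>a\<in>Some ` {1..S}. f a) = (\<Sum>s=1..S. lam s t)"
    by (subst sum.reindex) (auto simp: f_def)
  finally have "(\<integral>\<^sup>+a. ennreal (f a) \<partial>count_space UNIV) = 1"
    by (simp add: f_def)
  then show ?thesis
    unfolding arrival_pmf_def f_def[symmetric] using f_nonneg by (subst pmf_embed_pmf) auto
qed

lemma expectation_arrival_pmf:
  fixes F :: "nat option \<Rightarrow> real"
  assumes nonneg: "\<And>s. s \<in> {1..S} \<Longrightarrow> 0 \<le> lam s t" and total: "(\<Sum>s=1..S. lam s t) \<le> 1"
  shows "measure_pmf.expectation (arrival_pmf lam S t) F =
     (1 - (\<Sum>s=1..S. lam s t)) * F None + (\<Sum>s=1..S. lam s t * F (Some s))"
proof -
  have pmf_arr: "pmf (arrival_pmf lam S t) a = (case a of None \<Rightarrow> 1 - (\<Sum>s=1..S. lam s t)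
     | Some s \<Rightarrow> (if s \<in> {1..S} then lam s t else 0))" for a
    using nonneg total by (rule pmf_arrival_pmf)
  have "measure_pmf.expectation (arrival_pmf lam S t) F
      = (\<Sum>a\<in>insert None (Some ` {1..S}). F a * pmf (arrival_pmf lam S t) a)"
  proof (rule integral_measure_pmf_real)
    fix a assume "a \<in> set_pmf (arrival_pmf lam S t)"
    then have "pmf (arrival_pmf lam S t) a \<noteq> 0" by (simp add: set_pmf_iff)
    then show "a \<in> insert None (Some ` {1..S})"
      by (auto simp: pmf_arr split: option.splits if_splits)
  qed simp
  also have "\<dots> = (1 - (\<Sum>s=1..S. lam s t)) * F None + (\<Sum>s=1..S. lam s t * F (Some s))"
    by (subst sum.insert) (auto simp: sum.reindex pmf_arr intro!: sum.cong)
  finally show ?thesis .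
qed

context
  fixes V S :: nat and lam p :: "nat \<Rightarrow> nat \<Rightarrow> real" and g :: "nat pmf"
    and nprob :: "nat \<Rightarrow> nat \<Rightarrow> nat \<Rightarrow> real" and v :: nat
begin

definition task_outcome ::
  "nat \<Rightarrow> (nat \<Rightarrow> nat) \<Rightarrow> (nat \<Rightarrow> bool) \<Rightarrow> (nat \<Rightarrow> bool) \<Rightarrow> (nat \<Rightarrow> nat) \<Rightarrow> nat \<times> (nat \<Rightarrow> nat)" where
  "task_outcome t st N R Z =
     (if (v \<in> {1..V} \<and> N v \<and> st v \<le> t \<and> R v) \<and> (\<forall>u<v. \<not> (u \<in> {1..V} \<and> N u \<and> st u \<le> t \<and> R u))
      then 1 else 0,
      \<lambda>u. if u \<in> {1..V} \<and> N u \<and> st u \<le> t then t + Z u else st u)"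

definition task_pmf :: "nat \<Rightarrow> nat \<Rightarrow> (nat \<Rightarrow> nat) \<Rightarrow> (nat \<times> (nat \<Rightarrow> nat)) pmf" where
  "task_pmf s t st =
     bind_pmf (Pi_pmf {1..V} False (\<lambda>u. bernoulli_pmf (nprob u s t))) (\<lambda>N.
     bind_pmf (Pi_pmf {1..V} False (\<lambda>u. bernoulli_pmf (p u s))) (\<lambda>R.
     bind_pmf (Pi_pmf {1..V} 0 (\<lambda>u. g)) (\<lambda>Z. return_pmf (task_outcome t st N R Z))))"

lemma step_eq_task_pmf:
  "step V S lam p g nprob v t st =
     bind_pmf (arrival_pmf lam S t) (\<lambda>a. case a of None \<Rightarrow> return_pmf (0, st) | Some s \<Rightarrow> task_pmf s t st)"
  unfolding step_def task_pmf_def task_outcome_def Let_def ..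

lemma fst_step_le_1: "y \<in> set_pmf (step V S lam p g nprob v t st) \<Longrightarrow> fst y \<le> 1"
  unfolding step_eq_task_pmf task_pmf_def task_outcome_def by (auto split: option.splits)

lemma expectation_step:
  fixes h :: "nat \<times> (nat \<Rightarrow> nat) \<Rightarrow> real"
  assumes "\<And>s. s \<in> {1..S} \<Longrightarrow> 0 \<le> lam s t" and "(\<Sum>s=1..S. lam s t) \<le> 1"
    and "\<And>y. y \<in> set_pmf (step V S lam p g nprob v t st) \<Longrightarrow> \<bar>h y\<bar> \<le> B"
  shows "measure_pmf.expectation (step V S lam p g nprob v t st) h =
     (1 - (\<Sum>s=1..S. lam s t)) * h (0, st) + (\<Sum>s=1..S. lam s t * measure_pmf.expectation (task_pmf s t st) h)"
proof -
  have arrival: "measure_pmf.expectation (arrival_pmf lam S t) F =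
      (1 - (\<Sum>s=1..S. lam s t)) * F None + (\<Sum>s=1..S. lam s t * F (Some s))" for F
    using assms(1,2) by (rule expectation_arrival_pmf)
  show ?thesis
    using assms(3) unfolding step_eq_task_pmf
    by (subst expectation_bind_pmf[where B=B]) (auto simp: arrival)
qed

lemma expectation_task_pmf:
  fixes h :: "nat \<times> (nat \<Rightarrow> nat) \<Rightarrow> real"
  assumes "\<And>y. \<bar>h y\<bar> \<le> B"
  shows "measure_pmf.expectation (task_pmf s t st) h =
     measure_pmf.expectation (Pi_pmf {1..V} False (\<lambda>u. bernoulli_pmf (nprob u s t))) (\<lambda>N.
     measure_pmf.expectation (Pi_pmf {1..V} False (\<lambda>u. bernoulli_pmf (p u s))) (\<lambda>R.
     measure_pmf.expectation (Pi_pmf {1..V} 0 (\<lambda>u. g)) (\<lambda>Z. h (task_outcome t st N R Z))))"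
  unfolding task_pmf_def by (simp add: expectation_bind_pmf[where B=B] assms)

lemma expected_completion_task:
  fixes s t :: nat and st :: "nat \<Rightarrow> nat"
  assumes v: "v \<in> {1..V}"
    and nprob: "\<And>u. u \<in> {1..V} \<Longrightarrow> 0 \<le> nprob u s t \<and> nprob u s t \<le> 1"
    and p: "\<And>u. u \<in> {1..V} \<Longrightarrow> 0 \<le> p u s \<and> p u s \<le> 1"
  defines "w u \<equiv> if st u \<le> t then nprob u s t * p u s else 0"
  shows "measure_pmf.expectation (task_pmf s t st) (\<lambda>y. real (fst y)) = w v * (\<Prod>u\<in>{1..<v}. 1 - w u)"
proof -
  \<comment> \<open>expectation_task_pmf needs a bounded integrand; outcomes have first component 0 or 1\<close>
  have "measure_pmf.expectation (task_pmf s t st) (\<lambda>y. real (fst y)) =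
        measure_pmf.expectation (task_pmf s t st) (\<lambda>y. min 1 (real (fst y)))"
    by (intro integral_cong_AE) (auto simp: AE_measure_pmf_iff task_pmf_def task_outcome_def)
  also have "\<dots> = measure_pmf.expectation (Pi_pmf {1..V} False (\<lambda>u. bernoulli_pmf (nprob u s t))) (\<lambda>N.
       measure_pmf.expectation (Pi_pmf {1..V} False (\<lambda>u. bernoulli_pmf (p u s))) (\<lambda>R.
         if (v \<in> {1..V} \<and> N v \<and> st v \<le> t \<and> R v) \<and> (\<forall>u<v. \<not> (u \<in> {1..V} \<and> N u \<and> st u \<le> t \<and> R u))
         then 1 else 0))"
  proof -
    have "measure_pmf.expectation (Pi_pmf {1..V} 0 (\<lambda>u. g)) (\<lambda>Z. min 1 (real (fst (task_outcome t st N R Z)))) =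
      (if (v \<in> {1..V} \<and> N v \<and> st v \<le> t \<and> R v) \<and> (\<forall>u<v. \<not> (u \<in> {1..V} \<and> N u \<and> st u \<le> t \<and> R u))
         then 1 else 0)" for N R
      unfolding task_outcome_def by simp
    then show ?thesis by (subst expectation_task_pmf[where B=1]) auto
  qed
  also have "\<dots> = w v * (\<Prod>u\<in>{1..<v}. 1 - w u)"
    unfolding w_def by (rule prob_first_success) (use assms in auto)
  finally show ?thesis .
qed

lemma expectation_task_busy:
  assumes v: "v \<in> {1..V}" and nprob: "0 \<le> nprob v s t" "nprob v s t \<le> 1"
    and g0: "pmf g 0 = 0" and "t \<le> m"
  shows "measure_pmf.expectation (task_pmf s t st) (\<lambda>y. if m < snd y v then 1 else 0) =
     (if m < st v then 1 else 0) + (if st v \<le> t then nprob v s t * (1 - Gcdf g (m - t)) else 0)"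
proof -
  define k where "k n z = (if m < (if n \<and> st v \<le> t then t + z else st v) then 1 else 0 :: real)" for n z
  have "measure_pmf.expectation (task_pmf s t st) (\<lambda>y. if m < snd y v then 1 else 0) =
     measure_pmf.expectation (Pi_pmf {1..V} False (\<lambda>u. bernoulli_pmf (nprob u s t))) (\<lambda>N.
     measure_pmf.expectation (Pi_pmf {1..V} False (\<lambda>u. bernoulli_pmf (p u s))) (\<lambda>R.
     measure_pmf.expectation (Pi_pmf {1..V} 0 (\<lambda>u. g)) (\<lambda>Z. k (N v) (Z v))))"
    using v by (subst expectation_task_pmf[where B=1]) (auto simp: task_outcome_def k_def)
  also have "\<dots> = measure_pmf.expectation (Pi_pmf {1..V} False (\<lambda>u. bernoulli_pmf (nprob u s t))) (\<lambda>N.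
     measure_pmf.expectation g (k (N v)))"
    using v by (subst expectation_Pi_pmf_component[where f="k _"]) (auto simp: measure_pmf.prob_space)
  also have "\<dots> = measure_pmf.expectation (bernoulli_pmf (nprob v s t)) (\<lambda>n. measure_pmf.expectation g (k n))"
    using v by (subst expectation_Pi_pmf_component[where f="\<lambda>n. measure_pmf.expectation g (k n)"]) auto
  also have "\<dots> = nprob v s t * measure_pmf.expectation g (k True)
                 + (1 - nprob v s t) * measure_pmf.expectation g (k False)"
    using nprob by simp
  also have "\<dots> = (if m < st v then 1 else 0) + (if st v \<le> t then nprob v s t * (1 - Gcdf g (m - t)) else 0)"
  proof (cases "st v \<le> t")
    case True
    then have "k True = (\<lambda>z. if m < t + z then 1 else 0)" "k False = (\<lambda>z. 0)" "\<not> m < st v"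
      using \<open>t \<le> m\<close> by (auto simp: k_def fun_eq_iff)
    then show ?thesis
      using True expectation_survival[OF g0 \<open>t \<le> m\<close>] by simp
  next
    case False
    then have "k n = (\<lambda>z. if m < st v then 1 else 0)" for n
      by (auto simp: k_def fun_eq_iff)
    then show ?thesis
      using False by (simp add: algebra_simps)
  qed
  finally show ?thesis .
qed

lemma expected_completion_step:
  fixes t :: nat and st :: "nat \<Rightarrow> nat"
  assumes "\<And>s. s \<in> {1..S} \<Longrightarrow> 0 \<le> lam s t" and "(\<Sum>s=1..S. lam s t) \<le> 1"
    and v: "v \<in> {1..V}"
    and nprob: "\<And>u s. u \<in> {1..V} \<Longrightarrow> s \<in> {1..S} \<Longrightarrow> 0 \<le> nprob u s t \<and> nprob u s t \<le> 1"
    and p: "\<And>u s. u \<in> {1..V} \<Longrightarrow> s \<in> {1..S} \<Longrightarrow> 0 \<le> p u s \<and> p u s \<le> 1"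
  defines "w s u \<equiv> if st u \<le> t then nprob u s t * p u s else 0"
  shows "measure_pmf.expectation (step V S lam p g nprob v t st) (\<lambda>y. real (fst y)) =
     (\<Sum>s=1..S. lam s t * (w s v * (\<Prod>u\<in>{1..<v}. 1 - w s u)))"
proof -
  have task: "measure_pmf.expectation (task_pmf s t st) (\<lambda>y. real (fst y)) = w s v * (\<Prod>u\<in>{1..<v}. 1 - w s u)"
    if "s \<in> {1..S}" for s
    unfolding w_def by (rule expected_completion_task) (use v nprob p that in auto)
  show ?thesis
    using assms(1,2) by (subst expectation_step[where B=1]) (auto simp: task dest: fst_step_le_1)
qed

lemma expectation_step_busy:
  assumes "\<And>s. s \<in> {1..S} \<Longrightarrow> 0 \<le> lam s t" and "(\<Sum>s=1..S. lam s t) \<le> 1"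
    and v: "v \<in> {1..V}" and nprob: "\<And>s. s \<in> {1..S} \<Longrightarrow> 0 \<le> nprob v s t \<and> nprob v s t \<le> 1"
    and g0: "pmf g 0 = 0" and "t \<le> m"
  shows "measure_pmf.expectation (step V S lam p g nprob v t st) (\<lambda>y. if m < snd y v then 1 else 0) =
     (if m < st v then 1 else 0) +
     (if st v \<le> t then (\<Sum>s=1..S. lam s t * nprob v s t) * (1 - Gcdf g (m - t)) else 0)"
proof -
  have "measure_pmf.expectation (step V S lam p g nprob v t st) (\<lambda>y. if m < snd y v then 1 else 0) =
     (1 - (\<Sum>s=1..S. lam s t)) * (if m < st v then 1 else 0) + (\<Sum>s=1..S. lam s t *
       ((if m < st v then 1 else 0) + (if st v \<le> t then nprob v s t * (1 - Gcdf g (m - t)) else 0)))"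
  proof -
    have task: "measure_pmf.expectation (task_pmf s t st) (\<lambda>y. if m < snd y v then 1 else 0) =
       (if m < st v then 1 else 0) + (if st v \<le> t then nprob v s t * (1 - Gcdf g (m - t)) else 0)"
      if "s \<in> {1..S}" for s
      using nprob[OF that] by (intro expectation_task_busy v g0 \<open>t \<le> m\<close>) auto
    show ?thesis
      using assms(1,2) by (subst expectation_step[where B=1]) (auto simp: task)
  qed
  also have "\<dots> = (if m < st v then 1 else 0) +
     (if st v \<le> t then (\<Sum>s=1..S. lam s t * nprob v s t) * (1 - Gcdf g (m - t)) else 0)"
  proof (cases "st v \<le> t")
    case True
    then have "\<not> m < st v" using \<open>t \<le> m\<close> by simp
    then show ?thesis using True by (simp add: sum_distrib_right mult.assoc)
  next
    case False
    then show ?thesis by (simp add: sum_distrib_right[symmetric] algebra_simps)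
  qed
  finally show ?thesis .
qed

primrec state_pmf :: "nat \<Rightarrow> nat \<Rightarrow> (nat \<Rightarrow> nat) \<Rightarrow> (nat \<Rightarrow> nat) pmf" where
  "state_pmf 0 t st = return_pmf st"
| "state_pmf (Suc k) t st =
     bind_pmf (step V S lam p g nprob v t st) (\<lambda>y. state_pmf k (Suc t) (snd y))"

lemma state_pmf_Suc_right:
  "state_pmf (Suc k) t st = bind_pmf (state_pmf k t st) (\<lambda>st'. map_pmf snd (step V S lam p g nprob v (t + k) st'))"
proof (induction k arbitrary: t st)
  case 0
  then show ?case by (simp add: map_pmf_def bind_return_pmf)
next
  case (Suc k)
  have "state_pmf (Suc (Suc k)) t st =
      bind_pmf (step V S lam p g nprob v t st) (\<lambda>y. state_pmf (Suc k) (Suc t) (snd y))"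
    by simp
  also have "\<dots> = bind_pmf (step V S lam p g nprob v t st) (\<lambda>y.
      bind_pmf (state_pmf k (Suc t) (snd y)) (\<lambda>st'. map_pmf snd (step V S lam p g nprob v (Suc t + k) st')))"
    by (simp only: Suc.IH)
  also have "\<dots> = bind_pmf (state_pmf (Suc k) t st) (\<lambda>st'. map_pmf snd (step V S lam p g nprob v (t + Suc k) st'))"
    by (simp add: bind_assoc_pmf)
  finally show ?case .
qed

lemma run_le: "y \<in> set_pmf (run V S lam p g nprob v n t st) \<Longrightarrow> y \<le> n"
proof (induction n arbitrary: t st y)
  case 0
  then show ?case by simp
next
  case (Suc n)
  then obtain r st' z where "(r, st') \<in> set_pmf (step V S lam p g nprob v t st)"
    and "z \<in> set_pmf (run V S lam p g nprob v n (Suc t) st')" and "y = r + z"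
    by auto
  with Suc.IH fst_step_le_1 show ?case by fastforce
qed

lemma expected_completion_step_bounds:
  "0 \<le> measure_pmf.expectation (step V S lam p g nprob v t st) (\<lambda>y. real (fst y)) \<and>
   measure_pmf.expectation (step V S lam p g nprob v t st) (\<lambda>y. real (fst y)) \<le> 1"
  by (rule expectation_measure_pmf_bounds) (auto dest: fst_step_le_1)

lemma expectation_state_pmf_Suc:
  fixes f :: "(nat \<Rightarrow> nat) \<Rightarrow> real"
  assumes "\<And>st'. \<bar>f st'\<bar> \<le> B"
  shows "measure_pmf.expectation (state_pmf (Suc k) t st) f =
    measure_pmf.expectation (step V S lam p g nprob v t st)
      (\<lambda>y. measure_pmf.expectation (state_pmf k (Suc t) (snd y)) f)"
  unfolding state_pmf.simps by (rule expectation_bind_pmf) (use assms in auto)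

lemma expectation_run_Suc:
  "measure_pmf.expectation (run V S lam p g nprob v (Suc n) t st) real =
     measure_pmf.expectation (step V S lam p g nprob v t st) (\<lambda>y. real (fst y)) +
     measure_pmf.expectation (step V S lam p g nprob v t st)
       (\<lambda>y. measure_pmf.expectation (run V S lam p g nprob v n (Suc t) (snd y)) real)"
proof -
  let ?step = "step V S lam p g nprob v t st"
  let ?rest = "\<lambda>y. measure_pmf.expectation (run V S lam p g nprob v n (Suc t) (snd y)) real"
  have run_int: "integrable (measure_pmf (run V S lam p g nprob v n t' st')) real" for t' st'
    by (rule integrable_measure_pmf_bounded[where B="real n"]) (auto dest: run_le)
  have "measure_pmf.expectation (run V S lam p g nprob v (Suc n) t st) real =
        measure_pmf.expectation ?step (\<lambda>y. measure_pmf.expectation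
           ((\<lambda>(r, st'). map_pmf ((+) r) (run V S lam p g nprob v n (Suc t) st')) y) real)"
    unfolding run.simps
    by (rule expectation_bind_pmf[where B="real (Suc n)"]) (use run_le[of _ "Suc n" t st] in force)
  also have "\<dots> = measure_pmf.expectation ?step (\<lambda>y. real (fst y) + ?rest y)"
    by (rule Bochner_Integration.integral_cong[OF refl])
       (auto simp: run_int Bochner_Integration.integral_add split: prod.split)
  also have "\<dots> = measure_pmf.expectation ?step (\<lambda>y. real (fst y)) + measure_pmf.expectation ?step ?rest"
  proof (rule Bochner_Integration.integral_add)
    have "0 \<le> ?rest y \<and> ?rest y \<le> real n" for y
      by (rule expectation_measure_pmf_bounds) (auto dest: run_le)
    then show "integrable (measure_pmf ?step) ?rest"
      by (intro integrable_measure_pmf_bounded[where B="real n"]) auto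
    show "integrable (measure_pmf ?step) (\<lambda>y. real (fst y))"
      by (rule integrable_measure_pmf_bounded[where B=1]) (auto dest: fst_step_le_1)
  qed
  finally show ?thesis .
qed

lemma expectation_run:
  "measure_pmf.expectation (run V S lam p g nprob v n t st) real =
   (\<Sum>k<n. measure_pmf.expectation (state_pmf k t st)
        (\<lambda>st'. measure_pmf.expectation (step V S lam p g nprob v (t + k) st') (\<lambda>y. real (fst y))))"
proof (induction n arbitrary: t st)
  case 0
  then show ?case by simp
next
  case (Suc n)
  let ?step = "step V S lam p g nprob v t st"
  let ?c = "\<lambda>t st'. measure_pmf.expectation (step V S lam p g nprob v t st') (\<lambda>y. real (fst y))"
  have c_bound: "\<bar>?c t' st'\<bar> \<le> 1" for t' st'
    using expected_completion_step_bounds[of t' st'] by simp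
  have state_c_bounds: "0 \<le> measure_pmf.expectation (state_pmf k t' st') (?c t'') \<and>
      measure_pmf.expectation (state_pmf k t' st') (?c t'') \<le> 1" for k t' t'' st'
    by (rule expectation_measure_pmf_bounds) (use expected_completion_step_bounds in auto)
  have "measure_pmf.expectation (run V S lam p g nprob v (Suc n) t st) real = ?c t st +
      measure_pmf.expectation ?step
        (\<lambda>y. \<Sum>k<n. measure_pmf.expectation (state_pmf k (Suc t) (snd y)) (?c (Suc t + k)))"
    by (simp only: expectation_run_Suc Suc.IH)
  also have "\<dots> = ?c t st + (\<Sum>k<n. measure_pmf.expectation ?step
        (\<lambda>y. measure_pmf.expectation (state_pmf k (Suc t) (snd y)) (?c (Suc t + k))))"
    by (subst Bochner_Integration.integral_sum)
       (auto intro!: integrable_measure_pmf_bounded[where B=1] simp: state_c_bounds)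
  also have "\<dots> = ?c t st + (\<Sum>k<n. measure_pmf.expectation (state_pmf (Suc k) t st) (?c (t + Suc k)))"
    by (simp only: expectation_state_pmf_Suc[where B=1, OF c_bound] add_Suc_right add_Suc)
  finally show ?case
    unfolding sum.lessThan_Suc_shift by simp
qed

end

locale sdn_instance =
  fixes V S T :: nat and lam p :: "nat \<Rightarrow> nat \<Rightarrow> real" and g :: "nat pmf"
    and x :: "nat \<Rightarrow> nat \<Rightarrow> nat \<Rightarrow> real" and v :: nat
  assumes lam_nonneg: "\<And>s t. s \<in> {1..S} \<Longrightarrow> t \<in> {1..T} \<Longrightarrow> 0 \<le> lam s t"
    and lam_sum: "\<And>t. t \<in> {1..T} \<Longrightarrow> (\<Sum>s=1..S. lam s t) \<le> 1"
    and p_range: "\<And>u s. u \<in> {1..V} \<Longrightarrow> s \<in> {1..S} \<Longrightarrow> 0 \<le> p u s \<and> p u s \<le> 1"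
    and g_pos: "pmf g 0 = 0"
    and xP: "in_P V S T lam g x"
    and v: "v \<in> {1..V}"
begin

lemma x_range: "u \<in> {1..V} \<Longrightarrow> s \<in> {1..S} \<Longrightarrow> t \<in> {1..T} \<Longrightarrow> 0 \<le> x u s t \<and> x u s t \<le> 1"
  using xP unfolding in_P_def by blast

lemma load_le_1:
  "u \<in> {1..V} \<Longrightarrow> t \<in> {1..T} \<Longrightarrow>
    (\<Sum>\<tau>=1..t. \<Sum>s=1..S. lam s \<tau> * x u s \<tau> * (1 - Gcdf g (t - \<tau>))) \<le> 1"
  using xP unfolding in_P_def by blast

lemma sdn_beta_ge:
  assumes u: "u \<in> {1..V}" and t: "t \<in> {1..T}"
  shows "1 / (2 - mdhr g) \<le> sdn_beta S lam g x u t"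
proof -
  let ?q = "mdhr g"
  define A where "A = (\<Sum>t'=1..t-1. \<Sum>s=1..S. lam s t' * x u s t' * (1 - Gcdf g (t - t')))"
  have "A \<le> 1 - ?q"
  proof (cases "t = 1")
    case True
    then show ?thesis using mdhr_le_1[of g] by (simp add: A_def)
  next
    case False
    \<comment> \<open>one period of hazard at least q shrinks the load at t to (1 - q) times the load at t - 1\<close>
    have "A \<le> (\<Sum>t'=1..t-1. \<Sum>s=1..S. lam s t' * x u s t' * ((1 - ?q) * (1 - Gcdf g (t - 1 - t'))))"
      unfolding A_def
    proof (intro sum_mono mult_left_mono)
      fix t' s assume t': "t' \<in> {1..t-1}" and s: "s \<in> {1..S}"
      have "1 \<le> t - t'" using t' by auto
      from survival_le_mdhr[OF this, of g]
      show "1 - Gcdf g (t - t') \<le> (1 - ?q) * (1 - Gcdf g (t - 1 - t'))"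
        by (simp add: diff_commute)
      show "0 \<le> lam s t' * x u s t'"
        using lam_nonneg[OF s] x_range[OF u s] t' t by auto
    qed
    also have "\<dots> = (1 - ?q) * (\<Sum>t'=1..t-1. \<Sum>s=1..S. lam s t' * x u s t' * (1 - Gcdf g (t - 1 - t')))"
      by (simp add: sum_distrib_left algebra_simps)
    also have "\<dots> \<le> 1 - ?q"
    proof (intro mult_left_le)
      have "t - 1 \<in> {1..T}" using t False by auto
      from load_le_1[OF u this]
      show "(\<Sum>t'=1..t-1. \<Sum>s=1..S. lam s t' * x u s t' * (1 - Gcdf g (t - 1 - t'))) \<le> 1" .
    qed (use mdhr_le_1[of g] in simp)
    finally show ?thesis .
  qed
  moreover have "sdn_beta S lam g x u t = 1 - A / (2 - ?q)"
    unfolding sdn_beta_def A_def by (simp add: sum_divide_distrib)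
  moreover have "1 \<le> 2 - ?q" using mdhr_le_1[of g] by simp
  ultimately show ?thesis by (simp add: field_simps)
qed

lemma sdn_beta_pos:
  assumes "u \<in> {1..V}" "t \<in> {1..T}"
  shows "0 < sdn_beta S lam g x u t"
proof -
  have "0 < 1 / (2 - mdhr g)" using mdhr_le_1[of g] by simp
  with sdn_beta_ge[OF assms] show ?thesis by linarith
qed

lemma sdn_prob_nonneg:
  assumes "u \<in> {1..V}" "s \<in> {1..S}" "t \<in> {1..T}"
  shows "0 \<le> sdn_prob S lam g x u s t"
proof -
  have "0 < (2 - mdhr g) * sdn_beta S lam g x u t"
    using sdn_beta_pos[of u t] mdhr_le_1[of g] assms by simp
  then show ?thesis
    unfolding sdn_prob_def using x_range[OF assms] by simp
qed

lemma sdn_prob_le_x: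
  assumes "u \<in> {1..V}" "s \<in> {1..S}" "t \<in> {1..T}"
  shows "sdn_prob S lam g x u s t \<le> x u s t"
proof -
  have "1 \<le> (2 - mdhr g) * sdn_beta S lam g x u t"
    using sdn_beta_ge[of u t] mdhr_le_1[of g] assms by (simp add: field_simps)
  then show ?thesis
    unfolding sdn_prob_def using x_range[OF assms]
    by (simp add: divide_le_eq mult_le_cancel_left1 mult.commute)
qed

lemma sdn_prob_range:
  "u \<in> {1..V} \<Longrightarrow> s \<in> {1..S} \<Longrightarrow> t \<in> {1..T} \<Longrightarrow>
    0 \<le> sdn_prob S lam g x u s t \<and> sdn_prob S lam g x u s t \<le> 1"
  using sdn_prob_nonneg sdn_prob_le_x x_range by (meson order_trans)

lemma sdn_prob_mult_beta:
  "u \<in> {1..V} \<Longrightarrow> t \<in> {1..T} \<Longrightarrow>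
    sdn_prob S lam g x u s t * sdn_beta S lam g x u t = x u s t / (2 - mdhr g)"
  unfolding sdn_prob_def using sdn_beta_pos[of u t] mdhr_le_1[of g] by (simp add: field_simps)

abbreviation sdn_state :: "nat \<Rightarrow> (nat \<Rightarrow> nat) pmf" where
  "sdn_state k \<equiv> state_pmf V S lam p g (sdn_prob S lam g x) v k 1 (\<lambda>u. 0)"

text \<open>The probability that v is notified in period t while active, as it appears in \<open>\<beta>\<close>.\<close>
definition notify_rate :: "nat \<Rightarrow> real" where
  "notify_rate t = (\<Sum>s=1..S. lam s t * x v s t / (2 - mdhr g))"

lemma sdn_beta_eq_notify_rate:
  "sdn_beta S lam g x v t = 1 - (\<Sum>t'=1..t-1. notify_rate t' * (1 - Gcdf g (t - t')))"
  unfolding sdn_beta_def notify_rate_def by (simp add: sum_distrib_right mult.assoc)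

lemma notify_mass_mult_beta:
  "t \<in> {1..T} \<Longrightarrow>
    (\<Sum>s=1..S. lam s t * sdn_prob S lam g x v s t) * sdn_beta S lam g x v t = notify_rate t"
  unfolding notify_rate_def sum_distrib_right
  by (rule sum.cong) (use v sdn_prob_mult_beta in \<open>simp_all add: mult.assoc\<close>)

lemma prob_active_eq_sdn_beta:
  fixes D :: "(nat \<Rightarrow> nat) pmf"
  assumes "measure_pmf.expectation D (\<lambda>st. if Suc k < st v then 1 else 0) =
           (\<Sum>t'=1..k. notify_rate t' * (1 - Gcdf g (Suc k - t')))"
  shows "measure_pmf.expectation D (\<lambda>st. if st v \<le> Suc k then 1 else 0) = sdn_beta S lam g x v (Suc k)"
proof -
  have "measure_pmf.expectation D (\<lambda>st. if st v \<le> Suc k then 1 else 0) =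
      measure_pmf.expectation D (\<lambda>st. 1 - (if Suc k < st v then 1 else 0) :: real)"
    by (rule Bochner_Integration.integral_cong) auto
  also have "\<dots> = 1 - measure_pmf.expectation D (\<lambda>st. if Suc k < st v then 1 else 0)"
    by (subst Bochner_Integration.integral_diff) (auto intro!: integrable_measure_pmf_bounded[where B=1])
  also have "\<dots> = sdn_beta S lam g x v (Suc k)"
    using assms by (simp add: sdn_beta_eq_notify_rate)
  finally show ?thesis .
qed

lemma expectation_sdn_step_busy:
  assumes t: "t \<in> {1..T}" and "t \<le> m"
  shows "measure_pmf.expectation (step V S lam p g (sdn_prob S lam g x) v t st)
      (\<lambda>y. if m < snd y v then 1 else 0) =
    (if m < st v then 1 else 0) +
    (\<Sum>s=1..S. lam s t * sdn_prob S lam g x v s t) * (1 - Gcdf g (m - t)) * (if st v \<le> t then 1 else 0)"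
proof -
  have "measure_pmf.expectation (step V S lam p g (sdn_prob S lam g x) v t st)
      (\<lambda>y. if m < snd y v then 1 else 0) = (if m < st v then 1 else 0) +
    (if st v \<le> t then (\<Sum>s=1..S. lam s t * sdn_prob S lam g x v s t) * (1 - Gcdf g (m - t)) else 0)"
    by (rule expectation_step_busy) (use assms lam_nonneg lam_sum v g_pos sdn_prob_range in auto)
  then show ?thesis by simp
qed

lemma prob_busy_sdn_state:
  "k \<le> T \<Longrightarrow> k \<le> m \<Longrightarrow>
    measure_pmf.expectation (sdn_state k) (\<lambda>st. if m < st v then 1 else 0) =
    (\<Sum>t'=1..k. notify_rate t' * (1 - Gcdf g (m - t')))"
proof (induction k arbitrary: m)
  case 0
  then show ?case by simp
next
  case (Suc k)
  let ?np = "sdn_prob S lam g x"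
  let ?A = "\<Sum>s=1..S. lam s (Suc k) * ?np v s (Suc k)"
  let ?busy = "\<lambda>m st. if m < st v then 1 else 0 :: real"
  let ?active = "\<lambda>st. if st v \<le> Suc k then 1 else 0 :: real"
  have t: "Suc k \<in> {1..T}" using Suc.prems by auto
  have active: "measure_pmf.expectation (sdn_state k) ?active = sdn_beta S lam g x v (Suc k)"
    by (rule prob_active_eq_sdn_beta) (use Suc in auto)
  have "measure_pmf.expectation (sdn_state (Suc k)) (?busy m) =
      measure_pmf.expectation (sdn_state k)
        (\<lambda>st. measure_pmf.expectation (step V S lam p g ?np v (Suc k) st) (\<lambda>y. ?busy m (snd y)))"
    unfolding state_pmf_Suc_right by (subst expectation_bind_pmf[where B=1]) auto
  also have "\<dots> = measure_pmf.expectation (sdn_state k)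
        (\<lambda>st. ?busy m st + ?A * (1 - Gcdf g (m - Suc k)) * ?active st)"
    using Suc.prems by (simp only: expectation_sdn_step_busy[OF t])
  also have "\<dots> = measure_pmf.expectation (sdn_state k) (?busy m)
      + ?A * (1 - Gcdf g (m - Suc k)) * measure_pmf.expectation (sdn_state k) ?active"
    by (subst Bochner_Integration.integral_add)
       (auto intro!: integrable_mult_right integrable_measure_pmf_bounded[where B=1])
  also have "\<dots> = (\<Sum>t'=1..k. notify_rate t' * (1 - Gcdf g (m - t')))
      + notify_rate (Suc k) * (1 - Gcdf g (m - Suc k))"
    using Suc active by (simp add: notify_mass_mult_beta[OF t, symmetric] mult_ac)
  also have "\<dots> = (\<Sum>t'=1..Suc k. notify_rate t' * (1 - Gcdf g (m - t')))"
    by simp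
  finally show ?case .
qed

lemma expected_completion_step_ge:
  assumes t: "t \<in> {1..T}"
  shows "(if st v \<le> t then 1 else 0) *
      (\<Sum>s=1..S. lam s t * sdn_prob S lam g x v s t * p v s * (\<Prod>u\<in>{1..<v}. 1 - p u s * x u s t))
    \<le> measure_pmf.expectation (step V S lam p g (sdn_prob S lam g x) v t st) (\<lambda>y. real (fst y))"
proof -
  let ?np = "sdn_prob S lam g x"
  define w where "w s u = (if st u \<le> t then ?np u s t * p u s else 0)" for s u
  have np: "0 \<le> ?np u s t \<and> ?np u s t \<le> x u s t \<and> x u s t \<le> 1"
    if "u \<in> {1..V}" "s \<in> {1..S}" for u s
    using sdn_prob_range[OF that t] sdn_prob_le_x[OF that t] x_range[OF that t] by simp
  have w_le: "0 \<le> 1 - p u s * x u s t \<and> 1 - p u s * x u s t \<le> 1 - w s u"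
    if "u \<in> {1..V}" "s \<in> {1..S}" for u s
    using np[OF that] p_range[OF that] by (auto simp: w_def mult_le_one mult.commute intro: mult_left_mono)
  have "(if st v \<le> t then 1 else 0) *
      (\<Sum>s=1..S. lam s t * ?np v s t * p v s * (\<Prod>u\<in>{1..<v}. 1 - p u s * x u s t))
    = (\<Sum>s=1..S. lam s t * (w s v * (\<Prod>u\<in>{1..<v}. 1 - p u s * x u s t)))"
    by (simp add: w_def mult.assoc)
  also have "\<dots> \<le> (\<Sum>s=1..S. lam s t * (w s v * (\<Prod>u\<in>{1..<v}. 1 - w s u)))"
  proof (intro sum_mono mult_left_mono prod_mono)
    fix s u assume s: "s \<in> {1..S}" and u: "u \<in> {1..<v}"
    then have "u \<in> {1..V}" using v by auto
    then show "0 \<le> 1 - p u s * x u s t \<and> 1 - p u s * x u s t \<le> 1 - w s u"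
      using w_le s by blast
  next
    fix s assume s: "s \<in> {1..S}"
    show "0 \<le> w s v" using np[OF v s] p_range[OF v s] by (simp add: w_def)
    show "0 \<le> lam s t" using lam_nonneg[OF s t] .
  qed
  also have "\<dots> = measure_pmf.expectation (step V S lam p g ?np v t st) (\<lambda>y. real (fst y))"
    unfolding w_def
    by (rule expected_completion_step[symmetric]) (use lam_nonneg lam_sum t v p_range sdn_prob_range in auto)
  finally show ?thesis .
qed

lemma expected_completion_period_ge:
  assumes "k < T"
  shows "(\<Sum>s=1..S. lam s (Suc k) * (\<Prod>u\<in>{1..<v}. 1 - p u s * x u s (Suc k)) * p v s * x v s (Suc k))
        / (2 - mdhr g)
    \<le> measure_pmf.expectation (sdn_state k)
        (\<lambda>st. measure_pmf.expectation (step V S lam p g (sdn_prob S lam g x) v (Suc k) st) (\<lambda>y. real (fst y)))"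
proof -
  let ?np = "sdn_prob S lam g x"
  let ?c = "\<Sum>s=1..S. lam s (Suc k) * ?np v s (Suc k) * p v s * (\<Prod>u\<in>{1..<v}. 1 - p u s * x u s (Suc k))"
  let ?active = "\<lambda>st. if st v \<le> Suc k then 1 else 0 :: real"
  have t: "Suc k \<in> {1..T}" using assms by simp
  have "(\<Sum>s=1..S. lam s (Suc k) * (\<Prod>u\<in>{1..<v}. 1 - p u s * x u s (Suc k)) * p v s * x v s (Suc k))
        / (2 - mdhr g) = ?c * sdn_beta S lam g x v (Suc k)"
    unfolding sum_divide_distrib sum_distrib_right
  proof (rule sum.cong[OF refl])
    fix s
    let ?P = "\<Prod>u\<in>{1..<v}. 1 - p u s * x u s (Suc k)"
    have "lam s (Suc k) * ?P * p v s * x v s (Suc k) / (2 - mdhr g)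
        = lam s (Suc k) * ?P * p v s * (x v s (Suc k) / (2 - mdhr g))"
      by simp
    also have "\<dots> = lam s (Suc k) * ?np v s (Suc k) * p v s * ?P * sdn_beta S lam g x v (Suc k)"
      unfolding sdn_prob_mult_beta[OF v t, symmetric] by (simp only: ac_simps)
    finally show "lam s (Suc k) * ?P * p v s * x v s (Suc k) / (2 - mdhr g)
        = lam s (Suc k) * ?np v s (Suc k) * p v s * ?P * sdn_beta S lam g x v (Suc k)" .
  qed
  also have "\<dots> = measure_pmf.expectation (sdn_state k) (\<lambda>st. ?active st * ?c)"
    using prob_active_eq_sdn_beta[OF prob_busy_sdn_state] assms by simp
  also have "\<dots> \<le> measure_pmf.expectation (sdn_state k)
        (\<lambda>st. measure_pmf.expectation (step V S lam p g ?np v (Suc k) st) (\<lambda>y. real (fst y)))"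
    using expected_completion_step_ge[OF t] expected_completion_step_bounds
    by (intro integral_mono integrable_mult_left integrable_measure_pmf_bounded[where B=1]) auto
  finally show ?thesis .
qed

end

theorem lemma8:
  fixes V S T :: nat and lam :: "nat \<Rightarrow> nat \<Rightarrow> real" and p :: "nat \<Rightarrow> nat \<Rightarrow> real"
    and g :: "nat pmf" and x :: "nat \<Rightarrow> nat \<Rightarrow> nat \<Rightarrow> real" and v :: nat
  assumes lam_nonneg: "\<And>s t. s \<in> {1..S} \<Longrightarrow> t \<in> {1..T} \<Longrightarrow> 0 \<le> lam s t"
    and lam_sum: "\<And>t. t \<in> {1..T} \<Longrightarrow> (\<Sum>s=1..S. lam s t) \<le> 1"
    and p_range: "\<And>u s. u \<in> {1..V} \<Longrightarrow> s \<in> {1..S} \<Longrightarrow> 0 \<le> p u s \<and> p u s \<le> 1"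
    and g_pos: "pmf g 0 = 0"
    and xP: "in_P V S T lam g x"
    and v: "v \<in> {1..V}"
  shows "sdn_expected_completed V S T lam p g x v \<ge> f_obj S T lam p x v / (2 - mdhr g)"
proof -
  interpret sdn_instance V S T lam p g x v
    by unfold_locales (fact lam_nonneg lam_sum p_range g_pos xP v)+
  let ?F = "\<lambda>t. \<Sum>s=1..S. lam s t * (\<Prod>u\<in>{1..<v}. 1 - p u s * x u s t) * p v s * x v s t"
  have "f_obj S T lam p x v / (2 - mdhr g) = (\<Sum>k<T. ?F (Suc k) / (2 - mdhr g))"
    unfolding f_obj_def sum_divide_distrib by (rule sum_bounds_lt_plus1[symmetric])
  also have "\<dots> \<le> (\<Sum>k<T. measure_pmf.expectation (sdn_state k)
      (\<lambda>st. measure_pmf.expectation (step V S lam p g (sdn_prob S lam g x) v (1 + k) st) (\<lambda>y. real (fst y))))"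
    by (rule sum_mono) (use expected_completion_period_ge in simp)
  also have "\<dots> = sdn_expected_completed V S T lam p g x v"
    unfolding sdn_expected_completed_def by (rule expectation_run[symmetric])
  finally show ?thesis .
qed

end
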